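(* Let $G=(V,E)$ be an undirected graph, $r_\alpha$ a nonnegative integer and $\alpha\colon V\to\{0,1\}$. There is an $r_\alpha$-biased $(1,1)$-dissolution for $(G,\alpha)$ if and only if $G$ has a perfect matching of total weight at least $r_\alpha$ with respect to the edge weights $w(\{x,y\}):=1$ if $\alpha(x)=\alpha(y)=1$ and $w(\{x,y\}):=0$ otherwise.
   Context: For $V'\subseteq V(G)$ let $Z(V',G):=\{(x,y)\mid x\in V',\ y\in V(G)\setminus V',\ \{x,y\}\in E(G)\}$. For positive integers $s,\Delta_s$, an $(s,\Delta_s)$-dissolution for $G$ is a pair $(D,z)$ with $D\subset V(G)$ and $z\colon Z(D,G)\to\{0,\dots,s\}$ such that (a) each $v'\in D$ satisfies $\sum_{(v',v)\in Z(D,G)} z(v',v)=s$, and (b) each $v\in V(G)\setminus D$ satisfies $\sum_{(v',v)\in Z(D,G)} z(v',v)=\Delta_s$. Given $\alpha\colon V(G)\to\{0,\dots,s\}$ and an integer $r_\alpha$, a tuple $(D,z,z_\alpha,R_\alpha)$ is an $r_\alpha$-biased $(s,\Delta_s)$-dissolution for $(G,\alpha)$ if $(D,z)$ is an $(s,\Delta_s)$-dissolution, $z_\alpha\colon Z(D,G)\to\{0,\dots,s\}$, $R_\alpha\subseteq V(G)\setminus D$ with $|R_\alpha|=r_\alpha$, and (c) $z_\alpha(v',v)\le z(v',v)$ for all $(v',v)\in Z(D,G)$; (d) each $v'\in D$ satisfies $\sum_{(v',v)\in Z(D,G)} z_\alpha(v',v)=\alpha(v')$; (e) each $v\in R_\alpha$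 satisfies $\alpha(v)+\sum_{(v',v)\in Z(D,G)} z_\alpha(v',v)>(s+\Delta_s)/2$. *)

theory Defs
  imports Complex_Main
begin

definition graph :: "'a set \<Rightarrow> 'a set set \<Rightarrow> bool" where
  "graph V E \<longleftrightarrow> finite V \<and> (\<forall>e\<in>E. \<exists>x y. x \<noteq> y \<and> x \<in> V \<and> y \<in> V \<and> e = {x, y})"

definition Zset :: "'a set \<Rightarrow> 'a set set \<Rightarrow> 'a set \<Rightarrow> ('a \<times> 'a) set" where
  "Zset V E D = {(x, y). x \<in> D \<and> y \<in> V - D \<and> {x, y} \<in> E}"

definition dissolution ::
  "'a set \<Rightarrow> 'a set set \<Rightarrow> nat \<Rightarrow> nat \<Rightarrow> 'a set \<Rightarrow> ('a \<times> 'a \<Rightarrow> nat) \<Rightarrow> bool" where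
  "dissolution V E s \<Delta> D z \<longleftrightarrow>
     D \<subseteq> V \<and>
     (\<forall>p\<in>Zset V E D. z p \<le> s) \<and>
     (\<forall>v'\<in>D. (\<Sum>v\<in>{v. (v', v) \<in> Zset V E D}. z (v', v)) = s) \<and>
     (\<forall>v\<in>V - D. (\<Sum>v'\<in>{v'. (v', v) \<in> Zset V E D}. z (v', v)) = \<Delta>)"

definition biased_dissolution ::
  "'a set \<Rightarrow> 'a set set \<Rightarrow> nat \<Rightarrow> nat \<Rightarrow> ('a \<Rightarrow> nat) \<Rightarrow> nat \<Rightarrow>
   'a set \<Rightarrow> ('a \<times> 'a \<Rightarrow> nat) \<Rightarrow> ('a \<times> 'a \<Rightarrow> nat) \<Rightarrow> 'a set \<Rightarrow> bool" where
  "biased_dissolution V E s \<Delta> \<alpha> r\<alpha> D z z\<alpha> R\<alpha> \<longleftrightarrow>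
     dissolution V E s \<Delta> D z \<and>
     (\<forall>p\<in>Zset V E D. z\<alpha> p \<le> s) \<and>
     R\<alpha> \<subseteq> V - D \<and> card R\<alpha> = r\<alpha> \<and>
     (\<forall>p\<in>Zset V E D. z\<alpha> p \<le> z p) \<and>
     (\<forall>v'\<in>D. (\<Sum>v\<in>{v. (v', v) \<in> Zset V E D}. z\<alpha> (v', v)) = \<alpha> v') \<and>
     (\<forall>v\<in>R\<alpha>. real (\<alpha> v + (\<Sum>v'\<in>{v'. (v', v) \<in> Zset V E D}. z\<alpha> (v', v)))
                 > (real s + real \<Delta>) / 2)"

definition perfect_matching :: "'a set \<Rightarrow> 'a set set \<Rightarrow> 'a set set \<Rightarrow> bool" where
  "perfect_matching V E M \<longleftrightarrow>
     M \<subseteq> E \<and> (\<forall>e1\<in>M. \<forall>e2\<in>M. e1 \<noteq> e2 \<longrightarrow> e1 \<inter> e2 = {}) \<and> (\<forall>v\<in>V. \<exists>e\<in>M. v \<in> e)"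

definition edge_weight :: "('a \<Rightarrow> nat) \<Rightarrow> 'a set \<Rightarrow> nat" where
  "edge_weight \<alpha> e = (if \<exists>x y. e = {x, y} \<and> \<alpha> x = 1 \<and> \<alpha> y = 1 then 1 else 0)"

end

theory Submission
  imports Defs
begin

text \<open>In a (1,1)-dissolution every vertex of D sends its unit to exactly one neighbour outside D,
  and every vertex outside D receives a unit from exactly one neighbour in D; hence the edges
  carrying a unit form a perfect matching, and conversely a perfect matching oriented from one
  endpoint of each edge to the other is a (1,1)-dissolution. The bias condition
  \<open>\<alpha> v + (incoming z\<^sub>\<alpha>) > 1\<close> forces \<open>\<alpha> v = 1\<close> and the \<alpha>-unit of v's matched sender to arrive
  at v, so \<open>R\<^sub>\<alpha>\<close> injects into the matching edges of weight 1; conversely the receiving endpoints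
  of weight-1 matching edges can serve as \<open>R\<^sub>\<alpha>\<close>.\<close>

lemma graph_finite_edges:
  assumes "graph V E"
  shows "finite E"
proof (rule finite_subset)
  show "E \<subseteq> Pow V" using assms by (auto simp: graph_def)
  show "finite (Pow V)" using assms by (simp add: graph_def)
qed

lemma edge_weight_doubleton: "edge_weight \<alpha> {x, y} = 1 \<longleftrightarrow> \<alpha> x = 1 \<and> \<alpha> y = 1"
  by (auto simp: edge_weight_def doubleton_eq_iff)

lemma sum_edge_weight_eq_card:
  assumes "finite M"
  shows "(\<Sum>e\<in>M. edge_weight \<alpha> e) = card {e\<in>M. edge_weight \<alpha> e = 1}"
proof -
  have "(\<Sum>e\<in>M. edge_weight \<alpha> e) = (\<Sum>e\<in>M. if edge_weight \<alpha> e = 1 then 1 else 0)"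
    by (intro sum.cong) (auto simp: edge_weight_def)
  also have "\<dots> = card {e\<in>M. edge_weight \<alpha> e = 1}"
    using assms by (simp add: sum.inter_filter[symmetric])
  finally show ?thesis .
qed

lemma finite_Zset_successors: "finite V \<Longrightarrow> finite {b. (a, b) \<in> Zset V E D}"
  by (rule finite_subset[of _ V]) (auto simp: Zset_def)

lemma finite_Zset_predecessors: "finite D \<Longrightarrow> finite {a. (a, b) \<in> Zset V E D}"
  by (rule finite_subset[of _ D]) (auto simp: Zset_def)

lemma dissolution_unit_successor:
  assumes "dissolution V E 1 \<Delta> D z" "finite V" "a \<in> D"
  obtains b where "(a, b) \<in> Zset V E D" "z (a, b) = 1"
    "\<And>b'. (a, b') \<in> Zset V E D \<Longrightarrow> b' \<noteq> b \<Longrightarrow> z (a, b') = 0"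
proof -
  have "(\<Sum>b\<in>{b. (a, b) \<in> Zset V E D}. z (a, b)) = 1"
    using assms by (simp add: dissolution_def)
  then obtain b where b: "(a, b) \<in> Zset V E D" "z (a, b) = 1"
    "\<forall>b'\<in>{b. (a, b) \<in> Zset V E D}. b \<noteq> b' \<longrightarrow> z (a, b') = 0"
    unfolding sum_eq_1_iff[OF finite_Zset_successors[OF \<open>finite V\<close>]] by blast
  show ?thesis by (rule that[OF b(1,2)]) (use b(3) in auto)
qed

lemma dissolution_unit_predecessor:
  assumes "dissolution V E s 1 D z" "finite V" "v \<in> V - D"
  obtains a where "(a, v) \<in> Zset V E D" "z (a, v) = 1"
    "\<And>a'. (a', v) \<in> Zset V E D \<Longrightarrow> a' \<noteq> a \<Longrightarrow> z (a', v) = 0"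
proof -
  have "finite D" using assms(1,2) finite_subset unfolding dissolution_def by blast
  have "(\<Sum>a\<in>{a. (a, v) \<in> Zset V E D}. z (a, v)) = 1"
    using assms by (simp add: dissolution_def)
  then obtain a where a: "(a, v) \<in> Zset V E D" "z (a, v) = 1"
    "\<forall>a'\<in>{a. (a, v) \<in> Zset V E D}. a \<noteq> a' \<longrightarrow> z (a', v) = 0"
    unfolding sum_eq_1_iff[OF finite_Zset_predecessors[OF \<open>finite D\<close>]] by blast
  show ?thesis by (rule that[OF a(1,2)]) (use a(3) in auto)
qed

lemma dissolution_successor_unique:
  assumes "dissolution V E 1 \<Delta> D z" "finite V"
    and "(a, b) \<in> Zset V E D" "z (a, b) = 1" "(a, b') \<in> Zset V E D" "z (a, b') = 1"
  shows "b = b'"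
proof -
  have "a \<in> D" using assms(3) by (simp add: Zset_def)
  then show ?thesis
    using dissolution_unit_successor[OF assms(1,2)] assms(3-6) by (metis zero_neq_one)
qed

lemma dissolution_predecessor_unique:
  assumes "dissolution V E s 1 D z" "finite V"
    and "(a, v) \<in> Zset V E D" "z (a, v) = 1" "(a', v) \<in> Zset V E D" "z (a', v) = 1"
  shows "a = a'"
proof -
  have "v \<in> V - D" using assms(3) by (simp add: Zset_def)
  then show ?thesis
    using dissolution_unit_predecessor[OF assms(1,2)] assms(3-6) by (metis zero_neq_one)
qed

definition dissolution_matching ::
  "'a set \<Rightarrow> 'a set set \<Rightarrow> 'a set \<Rightarrow> ('a \<times> 'a \<Rightarrow> nat) \<Rightarrow> 'a set set" where
  "dissolution_matching V E D z = {{a, b} | a b. (a, b) \<in> Zset V E D \<and> z (a, b) = 1}"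

lemma perfect_matching_dissolution_matching:
  assumes "graph V E" and dis: "dissolution V E 1 1 D z"
  shows "perfect_matching V E (dissolution_matching V E D z)"
proof -
  let ?M = "dissolution_matching V E D z"
  have fin: "finite V" using assms(1) by (simp add: graph_def)
  have "?M \<subseteq> E"
    by (auto simp: dissolution_matching_def Zset_def)
  moreover have "e1 \<inter> e2 = {}" if e: "e1 \<in> ?M" "e2 \<in> ?M" "e1 \<noteq> e2" for e1 e2
  proof -
    obtain a b c d where abcd: "e1 = {a, b}" "(a, b) \<in> Zset V E D" "z (a, b) = 1"
      "e2 = {c, d}" "(c, d) \<in> Zset V E D" "z (c, d) = 1"
      using e(1,2) by (auto simp: dissolution_matching_def)
    \<comment> \<open>Senders lie in D and receivers outside, so two edges can only meet in a common
      sender or a common receiver, and the unit flow out of (into) a vertex is unique.\<close>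
    have "a \<noteq> c"
      using dissolution_successor_unique[OF dis fin] abcd e(3) by blast
    moreover have "b \<noteq> d"
      using dissolution_predecessor_unique[OF dis fin] abcd e(3) by blast
    ultimately show ?thesis using abcd(1,2,4,5) by (auto simp: Zset_def)
  qed
  moreover have "\<exists>e\<in>?M. v \<in> e" if "v \<in> V" for v
  proof (cases "v \<in> D")
    case True
    from dis fin this obtain b where "(v, b) \<in> Zset V E D" "z (v, b) = 1"
      by (rule dissolution_unit_successor)
    then show ?thesis by (auto simp: dissolution_matching_def)
  next
    case False
    with \<open>v \<in> V\<close> have "v \<in> V - D" by blast
    from dis fin this obtain a where "(a, v) \<in> Zset V E D" "z (a, v) = 1"
      by (rule dissolution_unit_predecessor)
    then show ?thesis by (auto simp: dissolution_matching_def)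
  qed
  ultimately show ?thesis by (auto simp: perfect_matching_def)
qed

lemma biased_dissolution_receiver_partner:
  assumes B: "biased_dissolution V E 1 1 \<alpha> r D z z\<alpha> R"
    and "finite V" "\<forall>v\<in>V. \<alpha> v \<le> 1" "v \<in> R"
  obtains a where "(a, v) \<in> Zset V E D" "z (a, v) = 1" "\<alpha> a = 1" "\<alpha> v = 1"
proof -
  have dis: "dissolution V E 1 1 D z" and D: "D \<subseteq> V" and v: "v \<in> V - D"
    using B assms(4) by (auto simp: biased_dissolution_def dissolution_def)
  let ?S = "\<Sum>a\<in>{a. (a, v) \<in> Zset V E D}. z\<alpha> (a, v)"
  have "?S \<le> (\<Sum>a\<in>{a. (a, v) \<in> Zset V E D}. z (a, v))"
    using B by (intro sum_mono) (auto simp: biased_dissolution_def)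
  also have "\<dots> = 1" using dis v by (simp add: dissolution_def)
  finally have "?S \<le> 1" .
  moreover have "real (\<alpha> v + ?S) > (real 1 + real 1) / 2"
    using B assms(4) unfolding biased_dissolution_def by blast
  then have "real 1 < real (\<alpha> v + ?S)" by simp
  then have "1 < \<alpha> v + ?S" by (simp only: of_nat_less_iff)
  moreover have "\<alpha> v \<le> 1" using assms(3) v by blast
  ultimately have "\<alpha> v = 1" "?S \<noteq> 0" by linarith+
  then obtain a where a: "(a, v) \<in> Zset V E D" "z\<alpha> (a, v) \<noteq> 0"
    using sum.neutral by (metis (mono_tags, lifting) mem_Collect_eq)
  have "z\<alpha> (a, v) \<le> z (a, v)" "z (a, v) \<le> 1" "a \<in> D"
    using B a(1) by (auto simp: biased_dissolution_def dissolution_def Zset_def)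
  with a(2) have "z (a, v) = 1" by linarith
  have "z\<alpha> (a, v) \<le> (\<Sum>b\<in>{b. (a, b) \<in> Zset V E D}. z\<alpha> (a, b))"
    using a(1) assms(2) by (intro member_le_sum) (auto intro: finite_Zset_successors)
  also have "\<dots> = \<alpha> a" using B \<open>a \<in> D\<close> by (simp add: biased_dissolution_def)
  finally have "\<alpha> a = 1" using a(2) assms(3) D \<open>a \<in> D\<close> by fastforce
  show ?thesis by (rule that) fact+
qed

lemma card_le_weight_dissolution_matching:
  assumes B: "biased_dissolution V E 1 1 \<alpha> r D z z\<alpha> R"
    and "graph V E" "\<forall>v\<in>V. \<alpha> v \<le> 1"
  shows "r \<le> (\<Sum>e\<in>dissolution_matching V E D z. edge_weight \<alpha> e)"
proof -
  let ?M = "dissolution_matching V E D z"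
  have finV: "finite V" using assms(2) by (simp add: graph_def)
  have "\<exists>a. (a, v) \<in> Zset V E D \<and> z (a, v) = 1 \<and> \<alpha> a = 1 \<and> \<alpha> v = 1" if "v \<in> R" for v
    using biased_dissolution_receiver_partner[OF B finV assms(3) that] by blast
  then obtain p where p: "\<And>v. v \<in> R \<Longrightarrow>
      (p v, v) \<in> Zset V E D \<and> z (p v, v) = 1 \<and> \<alpha> (p v) = 1 \<and> \<alpha> v = 1"
    by metis
  have inj: "inj_on (\<lambda>v. {p v, v}) R"
    using p by (intro inj_onI) (auto simp: Zset_def doubleton_eq_iff)
  have heavy: "(\<lambda>v. {p v, v}) ` R \<subseteq> {e\<in>?M. edge_weight \<alpha> e = 1}"
  proof (intro image_subsetI CollectI conjI)
    fix v assume "v \<in> R"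
    then show "{p v, v} \<in> ?M" using p unfolding dissolution_matching_def by blast
    show "edge_weight \<alpha> {p v, v} = 1"
      using p[OF \<open>v \<in> R\<close>] by (intro edge_weight_doubleton[THEN iffD2]) simp
  qed
  have "?M \<subseteq> E" by (auto simp: dissolution_matching_def Zset_def)
  then have finM: "finite ?M" using graph_finite_edges[OF assms(2)] by (rule finite_subset)
  have "card R = card ((\<lambda>v. {p v, v}) ` R)" using inj by (simp add: card_image)
  also have "\<dots> \<le> card {e\<in>?M. edge_weight \<alpha> e = 1}" using heavy finM by (intro card_mono) auto
  finally have "card R \<le> card {e\<in>?M. edge_weight \<alpha> e = 1}" .
  then show ?thesis
    using B finM by (simp add: biased_dissolution_def sum_edge_weight_eq_card)
qed

text \<open>The other endpoint of v's matching edge (an unspecified value if there is none).\<close>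
definition mate :: "'a set set \<Rightarrow> 'a \<Rightarrow> 'a" where
  "mate M v = (THE u. {v, u} \<in> M)"

locale graph_with_perfect_matching =
  fixes V :: "'a set" and E :: "'a set set" and M :: "'a set set"
  assumes graph: "graph V E"
    and matching: "perfect_matching V E M"
begin

lemma matching_edgeE:
  assumes "e \<in> M"
  obtains x y where "x \<noteq> y" "x \<in> V" "y \<in> V" "e = {x, y}"
proof -
  have "e \<in> E" using assms matching by (auto simp: perfect_matching_def)
  then show ?thesis using graph that unfolding graph_def by blast
qed

lemma matching_edge_subset: "e \<in> M \<Longrightarrow> e \<subseteq> V"
  by (erule matching_edgeE) simp

lemma matching_edge_neq:
  assumes "{v, u} \<in> M"
  shows "u \<noteq> v"
proof
  assume "u = v"
  obtain x y where "x \<noteq> y" "x \<in> V" "y \<in> V" "{v, u} = {x, y}"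
    using assms by (rule matching_edgeE)
  then show False using \<open>u = v\<close> by (auto simp: doubleton_eq_iff)
qed

lemma finite_matching: "finite M"
  using graph_finite_edges[OF graph] matching finite_subset by (auto simp: perfect_matching_def)

lemma matching_edge_unique:
  assumes "e1 \<in> M" "e2 \<in> M" "x \<in> e1" "x \<in> e2"
  shows "e1 = e2"
  using assms matching by (auto simp: perfect_matching_def)

lemma mate_eqI:
  assumes "{v, u} \<in> M"
  shows "mate M v = u"
  unfolding mate_def
proof (rule the_equality)
  show "{v, u} \<in> M" by fact
  fix u' assume u': "{v, u'} \<in> M"
  then have "{v, u'} = {v, u}" using assms matching_edge_unique by blast
  then show "u' = u"
    using matching_edge_neq[OF assms] matching_edge_neq[OF u'] by (auto simp: doubleton_eq_iff)
qed

lemma mate_in_matching: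
  assumes "v \<in> V"
  shows "{v, mate M v} \<in> M"
proof -
  obtain e where e: "e \<in> M" "v \<in> e" using assms matching by (auto simp: perfect_matching_def)
  obtain x y where "e = {x, y}" using e(1) by (rule matching_edgeE)
  with e have "{v, y} \<in> M \<or> {v, x} \<in> M" by (auto simp: insert_commute)
  then show ?thesis using mate_eqI by auto
qed

lemma mate_in_edges: "v \<in> V \<Longrightarrow> {v, mate M v} \<in> E"
  using mate_in_matching matching by (auto simp: perfect_matching_def)

lemma mate_neq: "v \<in> V \<Longrightarrow> mate M v \<noteq> v"
  using mate_in_matching matching_edge_neq by blast

lemma mate_in_vertices: "v \<in> V \<Longrightarrow> mate M v \<in> V"
  using mate_in_matching matching_edge_subset by blast

lemma mate_mate: "v \<in> V \<Longrightarrow> mate M (mate M v) = v"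
  using mate_in_matching by (metis insert_commute mate_eqI)

lemma orientation_exists: "\<exists>D\<subseteq>V. \<forall>v\<in>V. v \<in> D \<longleftrightarrow> mate M v \<notin> D"
proof -
  define pick :: "'a set \<Rightarrow> 'a" where "pick e = (SOME x. x \<in> e)" for e
  define D where "D = {v\<in>V. pick {v, mate M v} = v}"
  have "v \<in> D \<longleftrightarrow> mate M v \<notin> D" if v: "v \<in> V" for v
  proof -
    have "pick {v, mate M v} \<in> {v, mate M v}"
      unfolding pick_def by (rule someI[of _ v]) simp
    moreover have "v \<in> D \<longleftrightarrow> pick {v, mate M v} = v" using v by (simp add: D_def)
    moreover have "{mate M v, mate M (mate M v)} = {v, mate M v}"
      using mate_mate[OF v] by (simp add: insert_commute)
    then have "mate M v \<in> D \<longleftrightarrow> pick {v, mate M v} = mate M v"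
      using mate_in_vertices[OF v] by (simp add: D_def)
    ultimately show ?thesis using mate_neq[OF v] by auto
  qed
  moreover have "D \<subseteq> V" by (auto simp: D_def)
  ultimately show ?thesis by blast
qed

context
  fixes D :: "'a set"
  assumes orientation: "D \<subseteq> V" "\<forall>v\<in>V. v \<in> D \<longleftrightarrow> mate M v \<notin> D"
begin

lemma mate_in_Zset: "a \<in> D \<Longrightarrow> (a, mate M a) \<in> Zset V E D"
  using orientation mate_in_vertices mate_in_edges by (auto simp: Zset_def)

lemma sum_Zset_successors_mate:
  assumes "a \<in> D"
  shows "(\<Sum>b\<in>{b. (a, b) \<in> Zset V E D}. if b = mate M a then c else 0) = (c :: nat)"
proof -
  have "finite V" using graph by (simp add: graph_def)
  then show ?thesis using assms mate_in_Zset by (simp add: finite_Zset_successors)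
qed

lemma sum_Zset_predecessors_mate:
  assumes "v \<in> V - D"
  shows "(\<Sum>a\<in>{a. (a, v) \<in> Zset V E D}. if v = mate M a then g a else 0) = (g (mate M v) :: nat)"
proof -
  have fin: "finite D" using orientation graph finite_subset by (auto simp: graph_def)
  have "v = mate M a \<longleftrightarrow> a = mate M v" if "a \<in> D" for a
    using that assms orientation mate_mate mate_in_vertices by (metis DiffD1 subsetD)
  then have "(\<Sum>a\<in>{a. (a, v) \<in> Zset V E D}. if v = mate M a then g a else 0)
      = (\<Sum>a\<in>{a. (a, v) \<in> Zset V E D}. if a = mate M v then g a else 0)"
    by (intro sum.cong) (auto simp: Zset_def)
  also have "\<dots> = g (mate M v)"
  proof -
    have "mate M v \<in> D" using assms orientation by blast
    with mate_mate show ?thesis using assms mate_in_Zset[of "mate M v"]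
      by (simp add: finite_Zset_predecessors[OF fin])
  qed
  finally show ?thesis .
qed

lemma biased_dissolution_of_matching:
  assumes \<alpha>: "\<forall>v\<in>V. \<alpha> v \<le> 1"
    and R: "R \<subseteq> V - D" "\<forall>v\<in>R. \<alpha> v = 1 \<and> \<alpha> (mate M v) = 1"
  shows "biased_dissolution V E 1 1 \<alpha> (card R) D
           (\<lambda>(a, b). if b = mate M a then 1 else 0)
           (\<lambda>(a, b). if b = mate M a then \<alpha> a else 0) R"
proof -
  have \<alpha>_le: "\<alpha> a \<le> 1" if "(a, b) \<in> Zset V E D" for a b
    using that \<alpha> orientation by (auto simp: Zset_def)
  have "real (\<alpha> v + (\<Sum>a\<in>{a. (a, v) \<in> Zset V E D}. if v = mate M a then \<alpha> a else 0))
      > (real 1 + real 1) / 2" if "v \<in> R" for v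
  proof -
    have "(\<Sum>a\<in>{a. (a, v) \<in> Zset V E D}. if v = mate M a then \<alpha> a else 0) = \<alpha> (mate M v)"
      using R(1) that by (intro sum_Zset_predecessors_mate) blast
    with R(2) that show ?thesis by simp
  qed
  then show ?thesis
    unfolding biased_dissolution_def dissolution_def
    using orientation(1) R(1) \<alpha>_le sum_Zset_successors_mate sum_Zset_predecessors_mate[of _ "\<lambda>_. 1"]
    by auto
qed

lemma bij_betw_receivers_matching: "bij_betw (\<lambda>v. {v, mate M v}) (V - D) M"
proof (rule bij_betwI')
  fix v u assume "v \<in> V - D" "u \<in> V - D"
  then show "{v, mate M v} = {u, mate M u} \<longleftrightarrow> v = u"
    using orientation by (auto simp: doubleton_eq_iff)
next
  fix v assume "v \<in> V - D"
  then show "{v, mate M v} \<in> M" by (simp add: mate_in_matching)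
next
  fix e assume e: "e \<in> M"
  obtain x y where xy: "x \<noteq> y" "x \<in> V" "y \<in> V" "e = {x, y}"
    using e by (rule matching_edgeE)
  have "mate M x = y" using e xy(4) by (simp add: mate_eqI)
  moreover have "mate M y = x" using e xy(4) by (simp add: mate_eqI insert_commute)
  ultimately show "\<exists>v\<in>V - D. e = {v, mate M v}"
  proof (cases "x \<in> D")
    case True
    then have "y \<in> V - D" using xy(2,3) orientation(2) \<open>mate M x = y\<close> by blast
    moreover have "e = {y, mate M y}" using xy(4) \<open>mate M y = x\<close> by (simp add: insert_commute)
    ultimately show ?thesis by blast
  next
    case False
    then show ?thesis using xy(2,4) \<open>mate M x = y\<close> by blast
  qed
qed

lemma card_heavy_receivers:
  "card {v\<in>V - D. edge_weight \<alpha> {v, mate M v} = 1} = card {e\<in>M. edge_weight \<alpha> e = 1}"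
  using bij_betw_Collect[OF bij_betw_receivers_matching, of "\<lambda>e. edge_weight \<alpha> e = 1"]
  by (rule bij_betw_same_card) simp

end

lemma exists_biased_dissolution:
  assumes \<alpha>: "\<forall>v\<in>V. \<alpha> v \<le> 1" and weight: "r \<le> (\<Sum>e\<in>M. edge_weight \<alpha> e)"
  shows "\<exists>D z z\<alpha> R. biased_dissolution V E 1 1 \<alpha> r D z z\<alpha> R"
proof -
  obtain D where D: "D \<subseteq> V" "\<forall>v\<in>V. v \<in> D \<longleftrightarrow> mate M v \<notin> D"
    using orientation_exists by blast
  note weight
  also have "(\<Sum>e\<in>M. edge_weight \<alpha> e) = card {e\<in>M. edge_weight \<alpha> e = 1}"
    by (rule sum_edge_weight_eq_card[OF finite_matching])
  also have "\<dots> = card {v\<in>V - D. edge_weight \<alpha> {v, mate M v} = 1}"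
    by (rule card_heavy_receivers[OF D, symmetric])
  finally have "r \<le> card {v\<in>V - D. edge_weight \<alpha> {v, mate M v} = 1}" .
  then obtain R where R: "R \<subseteq> {v\<in>V - D. edge_weight \<alpha> {v, mate M v} = 1}" and "card R = r"
    by (rule obtain_subset_with_card_n)
  have "R \<subseteq> V - D" using R by blast
  moreover have "\<alpha> v = 1 \<and> \<alpha> (mate M v) = 1" if "v \<in> R" for v
  proof -
    have "edge_weight \<alpha> {v, mate M v} = 1" using R that by blast
    then show ?thesis by (rule edge_weight_doubleton[THEN iffD1])
  qed
  ultimately have "biased_dissolution V E 1 1 \<alpha> (card R) D
      (\<lambda>(a, b). if b = mate M a then 1 else 0) (\<lambda>(a, b). if b = mate M a then \<alpha> a else 0) R"
    by (intro biased_dissolution_of_matching[OF D \<alpha>]) blast+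
  then show ?thesis unfolding \<open>card R = r\<close> by blast
qed

end

theorem lemma3:
  fixes V :: "'a set" and E :: "'a set set" and \<alpha> :: "'a \<Rightarrow> nat" and r\<alpha> :: nat
  assumes "graph V E"
    and "\<forall>v\<in>V. \<alpha> v \<le> 1"
  shows "(\<exists>D z z\<alpha> R\<alpha>. biased_dissolution V E 1 1 \<alpha> r\<alpha> D z z\<alpha> R\<alpha>) \<longleftrightarrow>
         (\<exists>M. perfect_matching V E M \<and> (\<Sum>e\<in>M. edge_weight \<alpha> e) \<ge> r\<alpha>)"
proof
  assume "\<exists>D z z\<alpha> R\<alpha>. biased_dissolution V E 1 1 \<alpha> r\<alpha> D z z\<alpha> R\<alpha>"
  then obtain D z z\<alpha> R\<alpha> where B: "biased_dissolution V E 1 1 \<alpha> r\<alpha> D z z\<alpha> R\<alpha>" by blast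
  then have "perfect_matching V E (dissolution_matching V E D z)"
    using perfect_matching_dissolution_matching[OF assms(1)] by (simp add: biased_dissolution_def)
  with card_le_weight_dissolution_matching[OF B assms]
  show "\<exists>M. perfect_matching V E M \<and> (\<Sum>e\<in>M. edge_weight \<alpha> e) \<ge> r\<alpha>" by blast
next
  assume "\<exists>M. perfect_matching V E M \<and> (\<Sum>e\<in>M. edge_weight \<alpha> e) \<ge> r\<alpha>"
  then obtain M where M: "perfect_matching V E M" and weight: "(\<Sum>e\<in>M. edge_weight \<alpha> e) \<ge> r\<alpha>"
    by blast
  interpret graph_with_perfect_matching V E M using assms(1) M by unfold_locales
  show "\<exists>D z z\<alpha> R\<alpha>. biased_dissolution V E 1 1 \<alpha> r\<alpha> D z z\<alpha> R\<alpha>"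
    using exists_biased_dissolution assms(2) weight by blast
qed

end
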